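(* If a nontrivial real Banach space $X$ has the strong diameter $2$ property, then $X^*$ contains a subspace isomorphic to $\ell_1$.
   Context: A slice of the closed unit ball $B_X$ is a set $\{x\in B_X: x^*(x)>1-\alpha\}$ with $x^*\in S_{X^*}$, $\alpha>0$. $X$ has the strong diameter $2$ property if every convex combination $\sum_{i=1}^n\lambda_iS_i$ ($n\in\mathbb{N}$, $\lambda_i\geq0$, $\sum\lambda_i=1$, $S_i$ slices of $B_X$) has diameter $2$. *)

theory Defs
  imports "HOL-Analysis.Analysis"
begin

definition slice :: "('a::real_normed_vector \<Rightarrow>\<^sub>L real) \<Rightarrow> real \<Rightarrow> 'a set" where
  "slice f \<alpha> = {x. norm x \<le> 1 \<and> blinfun_apply f x > 1 - \<alpha>}"

definition strong_diameter_two :: "'a::real_normed_vector itself \<Rightarrow> bool" where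
  "strong_diameter_two _ \<longleftrightarrow>
     (\<forall>(n::nat) (lam::nat \<Rightarrow> real) (f::nat \<Rightarrow> ('a \<Rightarrow>\<^sub>L real)) (\<alpha>::nat \<Rightarrow> real).
        n \<ge> 1 \<and> (\<forall>i<n. lam i \<ge> 0 \<and> norm (f i) = 1 \<and> \<alpha> i > 0) \<and> (\<Sum>i<n. lam i) = 1
        \<longrightarrow> diameter {(\<Sum>i<n. lam i *\<^sub>R x i) | x::nat \<Rightarrow> 'a. \<forall>i<n. x i \<in> slice (f i) (\<alpha> i)} = 2)"

definition ell1 :: "(nat \<Rightarrow> real) set" where
  "ell1 = {a. summable (\<lambda>n. \<bar>a n\<bar>)}"

definition ell1_norm :: "(nat \<Rightarrow> real) \<Rightarrow> real" where
  "ell1_norm a = (\<Sum>n. \<bar>a n\<bar>)"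

text \<open>A normed space Y contains a subspace isomorphic to l_1: there is a linear
  isomorphic embedding T of l_1 into Y (its image is then such a subspace).\<close>
definition contains_ell1 :: "'b::real_normed_vector itself \<Rightarrow> bool" where
  "contains_ell1 _ \<longleftrightarrow>
     (\<exists>(T::(nat \<Rightarrow> real) \<Rightarrow> 'b) c C. c > 0 \<and>
        (\<forall>a\<in>ell1. \<forall>b\<in>ell1. T (\<lambda>n. a n + b n) = T a + T b) \<and>
        (\<forall>a\<in>ell1. \<forall>r. T (\<lambda>n. r * a n) = r *\<^sub>R T a) \<and>
        (\<forall>a\<in>ell1. c * ell1_norm a \<le> norm (T a) \<and> norm (T a) \<le> C * ell1_norm a))"

end

theory Submission
  imports Defs
begin

text \<open>If an average (S_1 + ... + S_m)/m of slices has diameter 2, a norming functional of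
  the difference of two almost antipodal points of it takes values close to 1 and to -1
  on every S_i. Applied to the slices cut out by the normalised signed sums
  \<plusminus>g_0 \<plusminus> ... \<plusminus> g_(n-1), one slice for each choice of signs, this yields g_n such that for
  every choice of signs some point of the unit ball makes \<plusminus>g_0 \<plusminus> ... \<plusminus> g_n exceed n + 1/2.
  Evaluating at the point belonging to the signs of a then gives
  \<parallel>\<Sum> a_k g_k\<parallel> \<ge> (\<Sum> \<bar>a_k\<bar>)/2, so the g_k span a copy of l_1 in X*. The norming
  functionals come from the Hahn-Banach theorem, proved by Zorn's lemma on norm-dominated
  linear graphs.\<close>

section \<open>The Hahn-Banach theorem for the norm\<close>

text \<open>A linear functional on a subspace of X, dominated by the norm, encoded by its graph.\<close>

definition norm_dominated :: "('a::real_normed_vector \<times> real) set \<Rightarrow> bool" where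
  "norm_dominated M \<longleftrightarrow> subspace M \<and> (\<forall>(x, a)\<in>M. a \<le> norm x)"

lemma norm_dominated_graph:
  assumes M: "norm_dominated M" and "(x, a) \<in> M" "(x, b) \<in> M"
  shows "a = b"
proof -
  have sub: "subspace M" and dom: "\<And>x a. (x, a) \<in> M \<Longrightarrow> a \<le> norm x"
    using M by (auto simp: norm_dominated_def)
  have "(x, a) - (x, b) \<in> M" "(x, b) - (x, a) \<in> M"
    using subspace_diff[OF sub] assms(2,3) by blast+
  then show ?thesis
    using dom[of 0 "a - b"] dom[of 0 "b - a"] by simp
qed

lemma norm_dominated_extension:
  assumes M: "norm_dominated M"
    and below: "\<And>z a. (z, a) \<in> M \<Longrightarrow> a - norm (z - x) \<le> c"
    and above: "\<And>z a. (z, a) \<in> M \<Longrightarrow> c \<le> norm (z + x) - a"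
  shows "norm_dominated (span (insert (x, c) M))"
proof -
  have sub: "subspace M" and dom: "\<And>x a. (x, a) \<in> M \<Longrightarrow> a \<le> norm x"
    using M by (auto simp: norm_dominated_def)
  have extended: "a + t * c \<le> norm (z + t *\<^sub>R x)" if za: "(z, a) \<in> M" for z a t
  proof (cases t "0::real" rule: linorder_cases)
    case less
    define s where "s = -t"
    have s: "s > 0" using less by (simp add: s_def)
    have "((1 / s) *\<^sub>R z, a / s) \<in> M"
      using subspace_scale[OF sub za, of "1 / s"] by simp
    from below[OF this] s have "a - s * norm ((1 / s) *\<^sub>R z - x) \<le> s * c"
      by (simp add: field_simps)
    moreover have "s * norm ((1 / s) *\<^sub>R z - x) = norm (s *\<^sub>R ((1 / s) *\<^sub>R z - x))"
      using s by simp
    moreover have "s *\<^sub>R ((1 / s) *\<^sub>R z - x) = z + t *\<^sub>R x"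
      using s by (simp add: scaleR_diff_right s_def)
    ultimately have "a - norm (z + t *\<^sub>R x) \<le> s * c"
      by simp
    then show ?thesis by (simp add: s_def)
  next
    case equal
    then show ?thesis using dom[OF za] by simp
  next
    case greater
    have "((1 / t) *\<^sub>R z, a / t) \<in> M"
      using subspace_scale[OF sub za, of "1 / t"] by simp
    from above[OF this] greater have "t * c \<le> t * norm ((1 / t) *\<^sub>R z + x) - a"
      by (simp add: field_simps)
    moreover have "t * norm ((1 / t) *\<^sub>R z + x) = norm (t *\<^sub>R ((1 / t) *\<^sub>R z + x))"
      using greater by simp
    moreover have "t *\<^sub>R ((1 / t) *\<^sub>R z + x) = z + t *\<^sub>R x"
      using greater by (simp add: scaleR_add_right)
    ultimately show ?thesis by simp
  qed
  have span_M: "span M = M"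
    using sub by (rule span_eq_iff[THEN iffD2])
  have "snd p \<le> norm (fst p)" if p: "p \<in> span (insert (x, c) M)" for p
  proof -
    obtain t where "p - t *\<^sub>R (x, c) \<in> M"
      using p unfolding span_insert span_M by blast
    then have "(fst p - t *\<^sub>R x, snd p - t * c) \<in> M"
      by (cases p) simp
    from extended[OF this, of t] show ?thesis
      by simp
  qed
  then show ?thesis
    by (auto simp: norm_dominated_def)
qed

lemma norm_dominated_extend:
  assumes M: "norm_dominated M"
  shows "\<exists>c. norm_dominated (span (insert (x, c) M))"
proof -
  have sub: "subspace M" and dom: "\<And>x a. (x, a) \<in> M \<Longrightarrow> a \<le> norm x"
    using M by (auto simp: norm_dominated_def)
  have sep: "a - norm (z - x) \<le> norm (z' + x) - b" if "(z, a) \<in> M" "(z', b) \<in> M" for z a z' b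
  proof -
    have "a + b \<le> norm (z + z')"
      using dom subspace_add[OF sub that] by simp
    also have "\<dots> \<le> norm (z - x) + norm (z' + x)"
      using norm_triangle_ineq[of "z - x" "z' + x"] by simp
    finally show ?thesis by simp
  qed
  define S where "S = {a - norm (z - x) | z a. (z, a) \<in> M}"
  have "S \<noteq> {}"
    using subspace_0[OF sub] by (auto simp: S_def zero_prod_def)
  moreover have "bdd_above S"
    using sep subspace_0[OF sub] by (fastforce simp: S_def bdd_above_def zero_prod_def)
  ultimately show ?thesis
    by (intro exI[of _ "Sup S"] norm_dominated_extension[OF M])
       (auto simp: S_def intro!: cSup_upper cSup_least sep)
qed

lemma exists_maximal_norm_dominated:
  fixes y :: "'a::real_normed_vector"
  shows "\<exists>M. norm_dominated M \<and> (y, norm y) \<in> M \<and>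
    (\<forall>M'. norm_dominated M' \<and> M \<subseteq> M' \<longrightarrow> M' = M)"
proof -
  define \<A> where "\<A> = {M. norm_dominated M \<and> (y, norm y) \<in> M}"
  have "\<forall>(x, a)\<in>span {(y, norm y)}. a \<le> norm x"
    by (auto simp: span_singleton intro!: mult_right_mono)
  then have "span {(y, norm y)} \<in> \<A>"
    by (simp add: \<A>_def norm_dominated_def span_base)
  then have "\<A> \<noteq> {}" by blast
  moreover have "\<Union>\<C> \<in> \<A>" if "\<C> \<noteq> {}" "subset.chain \<A> \<C>" for \<C>
  proof -
    have \<C>: "\<C> \<subseteq> \<A>" "\<And>X Y. X \<in> \<C> \<Longrightarrow> Y \<in> \<C> \<Longrightarrow> X \<subseteq> Y \<or> Y \<subseteq> X"
      using that(2) by (auto simp: subset.chain_def)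
    then have sub: "\<And>X. X \<in> \<C> \<Longrightarrow> subspace X"
      by (auto simp: \<A>_def norm_dominated_def)
    have "p + q \<in> \<Union>\<C>" if pq: "p \<in> \<Union>\<C>" "q \<in> \<Union>\<C>" for p q
    proof -
      obtain X Y where "X \<in> \<C>" "Y \<in> \<C>" "p \<in> X" "q \<in> Y"
        using pq by blast
      with \<C> obtain Z where "Z \<in> \<C>" "p \<in> Z" "q \<in> Z"
        by blast
      then show ?thesis
        using sub subspace_add by blast
    qed
    moreover have "0 \<in> \<Union>\<C>"
      using sub subspace_0 \<open>\<C> \<noteq> {}\<close> by blast
    moreover have "c *\<^sub>R p \<in> \<Union>\<C>" if "p \<in> \<Union>\<C>" for c p
      using that sub subspace_scale by blast
    ultimately have "subspace (\<Union>\<C>)"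
      unfolding subspace_def by blast
    then show ?thesis
      using \<C>(1) \<open>\<C> \<noteq> {}\<close> by (auto simp: \<A>_def norm_dominated_def)
  qed
  ultimately obtain M where "M \<in> \<A>" "\<forall>X\<in>\<A>. M \<subseteq> X \<longrightarrow> X = M"
    using subset_Zorn_nonempty[of \<A>] by blast
  then show ?thesis
    by (auto simp: \<A>_def)
qed

lemma exists_norming_functional:
  fixes y :: "'a::real_normed_vector"
  shows "\<exists>g::'a \<Rightarrow>\<^sub>L real. norm g \<le> 1 \<and> blinfun_apply g y = norm y"
proof -
  obtain M where M: "norm_dominated M" and y: "(y, norm y) \<in> M"
    and max: "\<And>M'. norm_dominated M' \<Longrightarrow> M \<subseteq> M' \<Longrightarrow> M' = M"
    using exists_maximal_norm_dominated[of y] by blast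
  have sub: "subspace M" and dom: "\<And>x a. (x, a) \<in> M \<Longrightarrow> a \<le> norm x"
    using M by (auto simp: norm_dominated_def)
  have total: "\<exists>a. (x, a) \<in> M" for x
  proof -
    obtain c where "norm_dominated (span (insert (x, c) M))"
      using norm_dominated_extend[OF M] by blast
    then have "span (insert (x, c) M) = M"
      by (intro max) (auto intro: span_base)
    then show ?thesis
      using span_base[of "(x, c)" "insert (x, c) M"] by auto
  qed
  define \<phi> where "\<phi> x = (THE a. (x, a) \<in> M)" for x
  have \<phi>: "(x, a) \<in> M \<longleftrightarrow> a = \<phi> x" for x a
    using total[of x] norm_dominated_graph[OF M]
    unfolding \<phi>_def by (metis theI)
  have add: "\<phi> (x + z) = \<phi> x + \<phi> z" for x z
    using subspace_add[OF sub, of "(x, \<phi> x)" "(z, \<phi> z)"] \<phi> by simp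
  have scale: "\<phi> (r *\<^sub>R x) = r * \<phi> x" for r x
    using subspace_scale[OF sub, of "(x, \<phi> x)" r] \<phi> by simp
  have bound: "norm (\<phi> x) \<le> norm x * 1" for x
    using dom[of x "\<phi> x"] dom[of "-x" "\<phi> (-x)"] scale[of "-1" x] \<phi> by auto
  have lin: "bounded_linear \<phi>"
    using add scale bound by (intro bounded_linear_intro[where K = 1]) auto
  show ?thesis
  proof (intro exI conjI)
    show "norm (Blinfun \<phi>) \<le> 1"
      using bound by (intro norm_blinfun_bound) (simp_all add: bounded_linear_Blinfun_apply[OF lin])
    show "blinfun_apply (Blinfun \<phi>) y = norm y"
      using y \<phi> by (simp add: bounded_linear_Blinfun_apply[OF lin])
  qed
qed

section \<open>Functionals oscillating on slices\<close>

lemma abs_blinfun_apply_le_norm: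
  fixes f :: "'a::real_normed_vector \<Rightarrow>\<^sub>L real"
  assumes "norm x \<le> 1"
  shows "\<bar>blinfun_apply f x\<bar> \<le> norm f"
proof -
  have "\<bar>blinfun_apply f x\<bar> \<le> norm f * norm x"
    using norm_blinfun[of f x] by simp
  also have "\<dots> \<le> norm f"
    using assms by (simp add: mult_left_le)
  finally show ?thesis .
qed

lemma exists_norm_one_functional:
  assumes "x \<noteq> (0::'a::real_normed_vector)"
  shows "\<exists>f::'a \<Rightarrow>\<^sub>L real. norm f = 1"
proof -
  obtain f :: "'a \<Rightarrow>\<^sub>L real" where f: "norm f \<le> 1" "blinfun_apply f x = norm x"
    using exists_norming_functional by blast
  have "norm x \<le> norm f * norm x"
    using norm_blinfun[of f x] f(2) by simp
  then show ?thesis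
    using f(1) assms by (intro exI[of _ f]) simp
qed

lemma term_ge_if_sum_ge:
  fixes d :: "'i \<Rightarrow> real"
  assumes "finite I" "j \<in> I" "\<And>i. i \<in> I \<Longrightarrow> d i \<le> B" "B * card I - e \<le> sum d I"
  shows "B - e \<le> d j"
proof -
  have "sum d I = d j + sum d (I - {j})"
    using assms(1,2) by (simp add: sum.remove)
  also have "sum d (I - {j}) \<le> B * (real (card I) - 1)"
    using sum_mono[of "I - {j}" d "\<lambda>_. B"] assms(1-3) card_gt_0_iff[of I]
    by (auto simp: card_Diff_singleton of_nat_diff mult.commute)
  finally show ?thesis
    using assms(4) by (simp add: algebra_simps)
qed

lemma strong_diameter_two_oscillating_functional:
  fixes f :: "'i \<Rightarrow> ('a::real_normed_vector \<Rightarrow>\<^sub>L real)"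
  assumes sd2: "strong_diameter_two TYPE('a)"
    and I: "finite I" "I \<noteq> {}" and f: "\<And>i. i \<in> I \<Longrightarrow> norm (f i) = 1"
    and \<alpha>: "\<alpha> > 0" and \<eta>: "0 < \<eta>" "\<eta> \<le> 1"
  shows "\<exists>g::'a \<Rightarrow>\<^sub>L real. norm g \<le> 1 \<and> (\<forall>i\<in>I. \<exists>x\<in>slice (f i) \<alpha>. \<exists>z\<in>slice (f i) \<alpha>.
           1 - \<eta> \<le> blinfun_apply g x \<and> blinfun_apply g z \<le> -(1 - \<eta>))"
proof -
  define m where "m = card I"
  obtain e where e: "bij_betw e {..<m} I"
    using ex_bij_betw_nat_finite[OF I(1)] by (auto simp: m_def atLeast0LessThan)
  have m: "m \<ge> 1" "real m > 0"
    using I by (auto simp: m_def Suc_le_eq card_gt_0_iff)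
  define D where "D = {(\<Sum>i<m. (1 / real m) *\<^sub>R x i) | x::nat \<Rightarrow> 'a.
    \<forall>i<m. x i \<in> slice (f (e i)) \<alpha>}"
  have "diameter D = 2"
    using sd2 m f e \<alpha> unfolding strong_diameter_two_def D_def
    by (drule_tac x = m in spec, drule_tac x = "\<lambda>_. 1 / real m" in spec)
       (auto simp: bij_betwE)
  moreover have "bounded D"
  proof (rule boundedI)
    fix u assume "u \<in> D"
    then obtain x where u: "u = (\<Sum>i<m. (1 / real m) *\<^sub>R x i)"
      and x: "\<forall>i<m. x i \<in> slice (f (e i)) \<alpha>"
      unfolding D_def by blast
    have "norm u \<le> (\<Sum>i<m. norm ((1 / real m) *\<^sub>R x i))"
      unfolding u by (rule norm_sum)
    also have "\<dots> \<le> (\<Sum>i<m. 1 / real m)"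
      using x m by (intro sum_mono) (auto simp: slice_def divide_right_mono)
    finally show "norm u \<le> 1"
      using m by simp
  qed
  moreover have "\<eta> / m \<le> \<eta>"
    using \<eta> m by (simp add: divide_le_eq)
  ultimately obtain u v where "u \<in> D" "v \<in> D" and uv: "2 - \<eta> / m < norm (u - v)"
    using diameter_lower_bounded[of D "2 - \<eta> / m"] \<eta> m by (auto simp: dist_norm)
  then obtain x z where u: "u = (\<Sum>i<m. (1 / real m) *\<^sub>R x i)"
    and v: "v = (\<Sum>i<m. (1 / real m) *\<^sub>R z i)"
    and xz: "\<forall>i<m. x i \<in> slice (f (e i)) \<alpha> \<and> z i \<in> slice (f (e i)) \<alpha>"
    unfolding D_def by blast
  obtain g :: "'a \<Rightarrow>\<^sub>L real" where g: "norm g \<le> 1" "blinfun_apply g (u - v) = norm (u - v)"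
    using exists_norming_functional by blast
  have gxz: "\<bar>blinfun_apply g (x i)\<bar> \<le> 1" "\<bar>blinfun_apply g (z i)\<bar> \<le> 1" if "i < m" for i
    using xz that g(1) abs_blinfun_apply_le_norm[of _ g]
    by (auto simp: slice_def intro: order_trans)
  define d where "d i = blinfun_apply g (x i) - blinfun_apply g (z i)" for i
  have "norm (u - v) = blinfun_apply g (u - v)"
    using g(2) by simp
  also have "\<dots> = (\<Sum>i<m. (1 / real m) * d i)"
    unfolding u v d_def
    by (simp add: blinfun.diff_right blinfun.sum_right blinfun.scaleR_right sum_subtractf[symmetric]
        right_diff_distrib)
  also have "\<dots> = (\<Sum>i<m. d i) / m"
    by (simp add: sum_divide_distrib)
  finally have "norm (u - v) = (\<Sum>i<m. d i) / m" .
  with uv have "real m * (2 - \<eta> / m) < real m * ((\<Sum>i<m. d i) / m)"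
    using m by (intro mult_strict_left_mono) auto
  then have sum_d: "2 * card {..<m} - \<eta> \<le> sum d {..<m}"
    using m by (simp add: right_diff_distrib)
  have "d i \<le> 2" if "i < m" for i
    using gxz[OF that] unfolding d_def abs_le_iff by linarith
  then have d_ge: "2 - \<eta> \<le> d i" if "i < m" for i
    using term_ge_if_sum_ge[of "{..<m}" i d 2 \<eta>] sum_d that by simp
  have osc: "1 - \<eta> \<le> blinfun_apply g (x j) \<and> blinfun_apply g (z j) \<le> -(1 - \<eta>)"
    if "j < m" for j
    using d_ge[OF that] gxz[OF that] unfolding d_def abs_le_iff by linarith
  have "\<exists>x\<in>slice (f i) \<alpha>. \<exists>z\<in>slice (f i) \<alpha>.
      1 - \<eta> \<le> blinfun_apply g x \<and> blinfun_apply g z \<le> -(1 - \<eta>)" if i: "i \<in> I" for i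
  proof -
    obtain j where "j < m" "i = e j"
      using e i by (auto simp: bij_betw_def)
    then show ?thesis
      using osc xz by blast
  qed
  with g(1) show ?thesis
    by blast
qed

section \<open>Signed sums\<close>

definition sign_pattern :: "nat set \<Rightarrow> nat \<Rightarrow> real" where
  "sign_pattern s k = (if k \<in> s then 1 else -1)"

definition sign_sum :: "nat set \<Rightarrow> nat \<Rightarrow> (nat \<Rightarrow> ('a::real_normed_vector \<Rightarrow>\<^sub>L real)) \<Rightarrow> 'a \<Rightarrow>\<^sub>L real" where
  "sign_sum s n G = (\<Sum>k<n. sign_pattern s k *\<^sub>R G k)"

text \<open>Each step adds 2^-(n+2) to the defect, which therefore stays below 1/2.\<close>

definition sign_defect :: "nat \<Rightarrow> real" where
  "sign_defect n = 1/2 - 1/2^(n+1)"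

definition nearly_sign_attaining :: "nat \<Rightarrow> (nat \<Rightarrow> ('a::real_normed_vector \<Rightarrow>\<^sub>L real)) \<Rightarrow> bool" where
  "nearly_sign_attaining n G \<longleftrightarrow> (\<forall>k<n. norm (G k) \<le> 1) \<and>
     (\<forall>s\<subseteq>{..<n}. \<exists>x. norm x \<le> 1 \<and> real n - sign_defect n \<le> blinfun_apply (sign_sum s n G) x)"

lemma abs_sign_pattern [simp]: "\<bar>sign_pattern s k\<bar> = 1"
  by (simp add: sign_pattern_def)

lemma blinfun_apply_sign_sum:
  "blinfun_apply (sign_sum s n G) x = (\<Sum>k<n. sign_pattern s k * blinfun_apply (G k) x)"
  by (simp add: sign_sum_def blinfun.sum_left blinfun.scaleR_left)

lemma norm_sign_sum_le:
  assumes "\<And>k. k < n \<Longrightarrow> norm (G k) \<le> 1"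
  shows "norm (sign_sum s n G) \<le> n"
proof -
  have "norm (sign_sum s n G) \<le> (\<Sum>k<n. norm (sign_pattern s k *\<^sub>R G k))"
    unfolding sign_sum_def by (rule norm_sum)
  also have "\<dots> \<le> (\<Sum>k<n. 1)"
    using assms by (intro sum_mono) simp
  finally show ?thesis
    by simp
qed

lemma nearly_sign_attaining_norm_sign_sum:
  assumes "nearly_sign_attaining n G" "s \<subseteq> {..<n}"
  shows "real n - sign_defect n \<le> norm (sign_sum s n G)"
proof -
  obtain x where "norm x \<le> 1" "real n - sign_defect n \<le> blinfun_apply (sign_sum s n G) x"
    using assms unfolding nearly_sign_attaining_def by blast
  then show ?thesis
    using abs_blinfun_apply_le_norm[of x "sign_sum s n G"] by simp
qed

lemma nearly_sign_attaining_0: "nearly_sign_attaining 0 G"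
  by (auto simp: nearly_sign_attaining_def sign_defect_def sign_sum_def intro: exI[of _ 0])

lemma nearly_sign_attaining_cong:
  assumes "nearly_sign_attaining n G" "\<And>k. k < n \<Longrightarrow> G' k = G k"
  shows "nearly_sign_attaining n G'"
  using assms by (simp add: nearly_sign_attaining_def sign_sum_def)

lemma slice_normalized_lower:
  fixes h :: "'a::real_normed_vector \<Rightarrow>\<^sub>L real"
  assumes "h \<noteq> 0" "w \<in> slice ((1 / norm h) *\<^sub>R h) \<alpha>"
  shows "norm h * (1 - \<alpha>) < blinfun_apply h w"
proof -
  have "1 - \<alpha> < blinfun_apply h w / norm h"
    using assms(2) by (simp add: slice_def blinfun.scaleR_left)
  then show ?thesis
    using assms(1) by (simp add: field_simps)
qed

lemma nearly_sign_attaining_Suc: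
  fixes G :: "nat \<Rightarrow> ('a::real_normed_vector \<Rightarrow>\<^sub>L real)"
  assumes sd2: "strong_diameter_two TYPE('a)" and f0: "norm (f0 :: 'a \<Rightarrow>\<^sub>L real) = 1"
    and G: "nearly_sign_attaining n G"
  shows "\<exists>g. nearly_sign_attaining (Suc n) (G(n := g))"
proof -
  define \<eta> :: real where "\<eta> = 1 / 2^(n+3)"
  define \<alpha> where "\<alpha> = \<eta> / (n + 1)"
  define h where "h s = sign_sum s n G" for s
  \<comment> \<open>slices need a norm-one functional; when \<open>h s = 0\<close> (only for \<open>n = 0\<close>) any will do\<close>
  define F where "F s = (if h s = 0 then f0 else (1 / norm (h s)) *\<^sub>R h s)" for s
  have \<eta>: "0 < \<eta>" "\<eta> \<le> 1" and \<alpha>: "\<alpha> > 0"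
    by (auto simp: \<eta>_def \<alpha>_def)
  have G_norm: "norm (G k) \<le> 1" if "k < n" for k
    using G that by (simp add: nearly_sign_attaining_def)
  have on_slice: "real n - sign_defect n - \<eta> \<le> blinfun_apply (h s) w"
    if s: "s \<subseteq> {..<n}" and w: "w \<in> slice (F s) \<alpha>" for s w
  proof (cases "h s = 0")
    case True
    then show ?thesis
      using nearly_sign_attaining_norm_sign_sum[OF G s] \<eta> by (simp add: h_def)
  next
    case False
    have "norm (h s) * \<alpha> \<le> real n * \<alpha>"
      using norm_sign_sum_le[OF G_norm] \<alpha> by (intro mult_right_mono) (auto simp: h_def)
    also have "\<dots> \<le> \<eta>"
      using \<eta> by (simp add: \<alpha>_def field_simps)
    finally have "norm (h s) * \<alpha> \<le> \<eta>" .
    moreover have "norm (h s) * (1 - \<alpha>) < blinfun_apply (h s) w"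
      using slice_normalized_lower[OF False] w False by (simp add: F_def)
    ultimately show ?thesis
      using nearly_sign_attaining_norm_sign_sum[OF G s] by (simp add: h_def algebra_simps)
  qed
  have F_norm: "norm (F s) = 1" for s
    using f0 by (simp add: F_def)
  obtain g :: "'a \<Rightarrow>\<^sub>L real" where g: "norm g \<le> 1"
    and osc: "\<And>s. s \<in> Pow {..<n} \<Longrightarrow> \<exists>x\<in>slice (F s) \<alpha>. \<exists>z\<in>slice (F s) \<alpha>.
       1 - \<eta> \<le> blinfun_apply g x \<and> blinfun_apply g z \<le> -(1 - \<eta>)"
    using strong_diameter_two_oscillating_functional[OF sd2, of "Pow {..<n}" F \<alpha> \<eta>] F_norm \<alpha> \<eta>
    by (auto simp: Pow_not_empty)
  have defect_Suc: "sign_defect (Suc n) = sign_defect n + 2 * \<eta>"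
    by (simp add: sign_defect_def \<eta>_def field_simps power_add)
  have "\<exists>w. norm w \<le> 1 \<and>
      real (Suc n) - sign_defect (Suc n) \<le> blinfun_apply (sign_sum s' (Suc n) (G(n := g))) w"
    if s': "s' \<subseteq> {..<Suc n}" for s'
  proof -
    define s where "s = s' \<inter> {..<n}"
    obtain x z where x: "x \<in> slice (F s) \<alpha>" "1 - \<eta> \<le> blinfun_apply g x"
      and z: "z \<in> slice (F s) \<alpha>" "blinfun_apply g z \<le> -(1 - \<eta>)"
      using osc[of s] by (auto simp: s_def)
    define w where "w = (if n \<in> s' then x else z)"
    have "w \<in> slice (F s) \<alpha>" "1 - \<eta> \<le> sign_pattern s' n * blinfun_apply g w"
      using x z by (auto simp: w_def sign_pattern_def)
    moreover have "blinfun_apply (sign_sum s' (Suc n) (G(n := g))) w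
        = blinfun_apply (h s) w + sign_pattern s' n * blinfun_apply g w"
      by (simp add: h_def blinfun_apply_sign_sum s_def sign_pattern_def)
    ultimately show ?thesis
      using on_slice[of s w] defect_Suc
      by (intro exI[of _ w]) (auto simp: slice_def s_def)
  qed
  with G_norm g show ?thesis
    by (intro exI[of _ g]) (auto simp: nearly_sign_attaining_def less_Suc_eq)
qed

lemma nearly_sign_attaining_lower_bound:
  assumes G: "nearly_sign_attaining n G"
  shows "(1/2) * (\<Sum>k<n. \<bar>a k\<bar>) \<le> norm (\<Sum>k<n. a k *\<^sub>R G k)"
proof -
  define s where "s = {k. k < n \<and> a k \<ge> 0}"
  have "s \<subseteq> {..<n}"
    by (auto simp: s_def)
  then obtain x where x: "norm x \<le> 1"
    and sum_t: "real n - sign_defect n \<le> blinfun_apply (sign_sum s n G) x"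
    using G unfolding nearly_sign_attaining_def by blast
  define t where "t k = sign_pattern s k * blinfun_apply (G k) x" for k
  have "norm (G k) \<le> 1" if "k < n" for k
    using G that by (simp add: nearly_sign_attaining_def)
  then have abs_G: "\<bar>blinfun_apply (G k) x\<bar> \<le> 1" if "k < n" for k
    using abs_blinfun_apply_le_norm[OF x, of "G k"] that by force
  have t_le: "t k \<le> 1" if "k < n" for k
    using abs_G[OF that] by (auto simp: t_def sign_pattern_def abs_le_iff)
  have "sign_defect n \<le> 1/2"
    by (simp add: sign_defect_def)
  then have t_ge: "1/2 \<le> t k" if "k < n" for k
    using term_ge_if_sum_ge[of "{..<n}" k t 1 "1/2"] that t_le sum_t
    by (simp add: t_def blinfun_apply_sign_sum)
  have "(1/2) * (\<Sum>k<n. \<bar>a k\<bar>) \<le> (\<Sum>k<n. \<bar>a k\<bar> * t k)"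
    unfolding sum_distrib_left
    using mult_left_mono[OF t_ge, of _ "\<bar>a _\<bar>"] by (intro sum_mono) (simp add: mult.commute)
  also have "\<dots> = (\<Sum>k<n. a k * blinfun_apply (G k) x)"
    by (intro sum.cong) (auto simp: t_def sign_pattern_def s_def)
  also have "\<dots> = blinfun_apply (\<Sum>k<n. a k *\<^sub>R G k) x"
    by (simp add: blinfun.sum_left blinfun.scaleR_left)
  also have "\<dots> \<le> norm (\<Sum>k<n. a k *\<^sub>R G k)"
    using abs_blinfun_apply_le_norm[OF x, of "\<Sum>k<n. a k *\<^sub>R G k"] by linarith
  finally show ?thesis .
qed

section \<open>Copies of l_1\<close>

lemma nat_prefix_choice:
  assumes start: "P 0 G0"
    and step: "\<And>n G. P n G \<Longrightarrow> \<exists>g. P (Suc n) (G(n := g))"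
    and cong: "\<And>n G G'. P n G \<Longrightarrow> (\<And>k. k < n \<Longrightarrow> G' k = G k) \<Longrightarrow> P n G'"
  shows "\<exists>G. \<forall>n. P n G"
proof -
  have "\<exists>F. \<forall>n. P n (F n) \<and> (\<exists>g. F (Suc n) = (F n)(n := g))"
  proof (rule dependent_nat_choice)
    show "\<exists>G. P 0 G"
      using start by blast
    show "\<exists>G'. P (Suc n) G' \<and> (\<exists>g. G' = G(n := g))" if "P n G" for G n
      using step[OF that] by blast
  qed
  then obtain F where F: "\<And>n. P n (F n)" and F_Suc: "\<And>n. \<exists>g. F (Suc n) = (F n)(n := g)"
    by blast
  have stable: "F n k = F (Suc k) k" if "k < n" for n k
    using that
  proof (induction n)
    case (Suc n)
    obtain g where "F (Suc n) = (F n)(n := g)"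
      using F_Suc by blast
    with Suc show ?case
      by (cases "k = n") simp_all
  qed simp
  have "P n (\<lambda>k. F (Suc k) k)" for n
    using F[of n] by (rule cong) (erule stable[symmetric])
  then show ?thesis by blast
qed

lemma contains_ell1I:
  fixes e :: "nat \<Rightarrow> 'b::banach"
  assumes c: "c > 0" and upper: "\<And>k. norm (e k) \<le> C"
    and lower: "\<And>n a. c * (\<Sum>k<n. \<bar>a k\<bar>) \<le> norm (\<Sum>k<n. a k *\<^sub>R e k)"
  shows "contains_ell1 TYPE('b)"
proof -
  define T where "T a = (\<Sum>k. a k *\<^sub>R e k)" for a :: "nat \<Rightarrow> real"
  have abs_sum: "summable (\<lambda>k. \<bar>a k\<bar>)" if "a \<in> ell1" for a
    using that by (simp add: ell1_def)
  have norm_le: "norm (a k *\<^sub>R e k) \<le> \<bar>a k\<bar> * C" for a k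
    using mult_left_mono[OF upper[of k], of "\<bar>a k\<bar>"] by simp
  have norm_summable: "summable (\<lambda>k. norm (a k *\<^sub>R e k))" if "a \<in> ell1" for a
  proof (rule summable_comparison_test'[where N = 0])
    show "summable (\<lambda>k. \<bar>a k\<bar> * C)"
      using abs_sum[OF that] by (rule summable_mult2)
    show "norm (norm (a k *\<^sub>R e k)) \<le> \<bar>a k\<bar> * C" for k
      using norm_le[of a k] by simp
  qed
  have summable: "summable (\<lambda>k. a k *\<^sub>R e k)" if "a \<in> ell1" for a
    using summable_norm_cancel[OF norm_summable[OF that]] .
  have "c * ell1_norm a \<le> norm (T a) \<and> norm (T a) \<le> C * ell1_norm a" if a: "a \<in> ell1" for a
  proof
    have "(\<lambda>n. c * (\<Sum>k<n. \<bar>a k\<bar>)) \<longlonglongrightarrow> c * ell1_norm a"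
      unfolding ell1_norm_def by (intro tendsto_mult_left summable_LIMSEQ abs_sum[OF a])
    moreover have "(\<lambda>n. norm (\<Sum>k<n. a k *\<^sub>R e k)) \<longlonglongrightarrow> norm (T a)"
      unfolding T_def by (intro tendsto_norm summable_LIMSEQ summable[OF a])
    ultimately show "c * ell1_norm a \<le> norm (T a)"
      by (rule LIMSEQ_le) (use lower in blast)
    have "norm (T a) \<le> (\<Sum>k. norm (a k *\<^sub>R e k))"
      unfolding T_def by (rule summable_norm[OF norm_summable[OF a]])
    also have "\<dots> \<le> (\<Sum>k. \<bar>a k\<bar> * C)"
      by (rule suminf_le[OF _ norm_summable[OF a] summable_mult2[OF abs_sum[OF a]]]) (rule norm_le)
    also have "\<dots> = C * ell1_norm a"
      using suminf_mult2[OF abs_sum[OF a], of C] by (simp add: ell1_norm_def mult.commute)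
    finally show "norm (T a) \<le> C * ell1_norm a" .
  qed
  moreover have "T (\<lambda>n. a n + b n) = T a + T b" if "a \<in> ell1" "b \<in> ell1" for a b
    unfolding T_def using summable that
    by (simp add: scaleR_add_left suminf_add)
  moreover have "T (\<lambda>n. r * a n) = r *\<^sub>R T a" if "a \<in> ell1" for a r
    unfolding T_def using suminf_scaleR_right[OF summable[OF that], of r] by simp
  ultimately show ?thesis
    unfolding contains_ell1_def using c by blast
qed

theorem corollary3p7:
  assumes "\<exists>x::'a::banach. x \<noteq> 0"
    and "strong_diameter_two TYPE('a)"
  shows "contains_ell1 TYPE('a \<Rightarrow>\<^sub>L real)"
proof -
  obtain f0 :: "'a \<Rightarrow>\<^sub>L real" where f0: "norm f0 = 1"
    using assms(1) exists_norm_one_functional by blast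
  have "\<exists>G :: nat \<Rightarrow> ('a \<Rightarrow>\<^sub>L real). \<forall>n. nearly_sign_attaining n G"
  proof (rule nat_prefix_choice)
    show "nearly_sign_attaining 0 (\<lambda>_. 0)"
      by (rule nearly_sign_attaining_0)
  qed (use nearly_sign_attaining_Suc[OF assms(2) f0] nearly_sign_attaining_cong in blast)+
  then obtain G :: "nat \<Rightarrow> ('a \<Rightarrow>\<^sub>L real)" where G: "\<And>n. nearly_sign_attaining n G"
    by blast
  have "norm (G k) \<le> 1" for k
    using G[of "Suc k"] by (simp add: nearly_sign_attaining_def)
  then show ?thesis
    using nearly_sign_attaining_lower_bound[OF G] by (intro contains_ell1I[of "1/2" _ 1]) auto
qed

end
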